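(* Let $\mathfrak d$ be a delta operator, $\mathcal Z=(z_i)_{i\ge0}$ a grid, $\xi\in\mathbb K$, and $\mathcal W=(w_i)_{i\ge0}$ with $w_i=z_i+i\xi$. Then the generalized Gončarov basis associated with $(\mathfrak d,\mathcal W)$ coincides with the generalized Gončarov basis associated with $(E_\xi\mathfrak d,\mathcal Z)$.
   Context: $\mathbb K$ is a field of characteristic zero; $E_a$ is the shift $f(x)\mapsto f(x+a)$; a delta operator is a linear operator $\mathfrak d$ on $\mathbb K[x]$ commuting with all $E_a$ and with $\mathfrak d(x)$ a nonzero constant ($E_\xi\mathfrak d$ is again a delta operator). $\varepsilon_z$ is evaluation at $z$. A grid is a sequence in $\mathbb K$. The generalized Gončarov basis associated with $(\mathfrak d,\mathcal Z)$ is the unique sequence $(t_n)_{n\ge0}$ with $\deg t_n=n$ and $\varepsilon_{z_i}(\mathfrak d^{\,i}(t_n))=n!\,\delta_{i,n}$ for all $i,n$. *)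

theory Defs
  imports "HOL-Computational_Algebra.Polynomial"
begin

text \<open>Shift operator E_a : f(x) \<mapsto> f(x + a).\<close>
definition shift :: "'a::comm_ring_1 \<Rightarrow> 'a poly \<Rightarrow> 'a poly" where
  "shift a p = pcompose p [:a, 1:]"

definition linear_op :: "('a::field_char_0 poly \<Rightarrow> 'a poly) \<Rightarrow> bool" where
  "linear_op d \<longleftrightarrow> (\<forall>p q. d (p + q) = d p + d q) \<and> (\<forall>c p. d (smult c p) = smult c (d p))"

definition delta_op :: "('a::field_char_0 poly \<Rightarrow> 'a poly) \<Rightarrow> bool" where
  "delta_op d \<longleftrightarrow> linear_op d \<and> (\<forall>a p. d (shift a p) = shift a (d p))
     \<and> (\<exists>c. c \<noteq> 0 \<and> d [:0, 1:] = [:c:])"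

definition is_goncarov_basis ::
    "('a::field_char_0 poly \<Rightarrow> 'a poly) \<Rightarrow> (nat \<Rightarrow> 'a) \<Rightarrow> (nat \<Rightarrow> 'a poly) \<Rightarrow> bool" where
  "is_goncarov_basis d Z t \<longleftrightarrow>
     (\<forall>n. degree (t n) = n) \<and>
     (\<forall>i n. poly ((d ^^ i) (t n)) (Z i) = (if i = n then of_nat (fact n) else 0))"

definition goncarov_basis ::
    "('a::field_char_0 poly \<Rightarrow> 'a poly) \<Rightarrow> (nat \<Rightarrow> 'a) \<Rightarrow> (nat \<Rightarrow> 'a poly)" where
  "goncarov_basis d Z = (THE t. is_goncarov_basis d Z t)"

end

theory Submission
  imports Defs
begin

text \<open>Since \<open>d\<close> commutes with shifts, \<open>(E\<^sub>\<xi> d)\<^sup>i = E\<^bsub>i\<xi>\<^esub> d\<^sup>i\<close>; hence evaluating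
  \<open>(E\<^sub>\<xi> d)\<^sup>i t\<close> at \<open>z\<^sub>i\<close> is evaluating \<open>d\<^sup>i t\<close> at \<open>z\<^sub>i + i\<xi> = w\<^sub>i\<close>. The two
  interpolation problems therefore have literally the same solutions, and no uniqueness
  argument is needed.\<close>

lemma shift_0 [simp]: "shift 0 p = p"
  unfolding shift_def by (simp add: pcompose_pCons)

lemma shift_shift: "shift a (shift b p) = shift (a + b) (p :: 'a::comm_ring_1 poly)"
  unfolding shift_def by (simp add: pcompose_assoc[symmetric] pcompose_pCons add.commute)

lemma poly_shift: "poly (shift a p) x = poly p (a + x)"
  unfolding shift_def by (simp add: poly_pcompose)

lemma funpow_shift_comp:
  fixes d :: "'a::comm_ring_1 poly \<Rightarrow> 'a poly"
  assumes commute: "\<And>a p. d (shift a p) = shift a (d p)"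
  shows "((shift \<xi> \<circ> d) ^^ i) p = shift (of_nat i * \<xi>) ((d ^^ i) p)"
proof (induction i)
  case 0
  show ?case by simp
next
  case (Suc i)
  then show ?case by (simp add: commute shift_shift algebra_simps)
qed

lemma is_goncarov_basis_shift_iff:
  fixes d :: "'a::field_char_0 poly \<Rightarrow> 'a poly"
  assumes "\<And>a p. d (shift a p) = shift a (d p)"
    and "\<And>i. W i = Z i + of_nat i * \<xi>"
  shows "is_goncarov_basis d W t \<longleftrightarrow> is_goncarov_basis (shift \<xi> \<circ> d) Z t"
  unfolding is_goncarov_basis_def
  by (simp add: funpow_shift_comp[OF assms(1)] poly_shift assms(2) add.commute)

theorem mainTheorem7:
  fixes d :: "'a::field_char_0 poly \<Rightarrow> 'a poly"
    and Z W :: "nat \<Rightarrow> 'a" and \<xi> :: 'a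
  assumes "delta_op d"
    and "\<And>i. W i = Z i + of_nat i * \<xi>"
  shows "goncarov_basis d W = goncarov_basis (shift \<xi> \<circ> d) Z"
proof -
  have "\<And>a p. d (shift a p) = shift a (d p)"
    using assms(1) unfolding delta_op_def by blast
  then have "is_goncarov_basis d W = is_goncarov_basis (shift \<xi> \<circ> d) Z"
    using is_goncarov_basis_shift_iff assms(2) by blast
  then show ?thesis
    unfolding goncarov_basis_def by simp
qed

end
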